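(* Let $\psi_0(x,t)$ be a classical solution of $\mathrm{i}\psi_t+\tfrac12\psi_{xx}+(|\psi|^2-1)\psi=0$ on $\mathbb{R}^2$, let $\zeta\in\mathbb{C}$, and let $\mathbf{u}^{[a]}(x,t)$, $\mathbf{u}^{[b]}(x,t)$ be (not necessarily distinct) $\mathbb{C}^2$-valued simultaneous solutions of $\mathbf{u}_x=\begin{bmatrix}-\mathrm{i}\zeta&\psi_0\\-\psi_0^*&\mathrm{i}\zeta\end{bmatrix}\mathbf{u}$ and $\mathbf{u}_t=\begin{bmatrix}-\mathrm{i}\zeta^2+\frac{\mathrm{i}}2(|\psi_0|^2-1)&\zeta\psi_0+\frac{\mathrm{i}}2\psi_{0x}\\-\zeta\psi_0^*+\frac{\mathrm{i}}2\psi_{0x}^*&\mathrm{i}\zeta^2-\frac{\mathrm{i}}2(|\psi_0|^2-1)\end{bmatrix}\mathbf{u}$. Then for every $C\in\mathbb{C}$ the function $$\psi_1(x,t)=C\,u^{[a]}_1u^{[b]}_1-C^*\,\big(u^{[a]}_2u^{[b]}_2\big)^*$$ solves the linearized NLS equation $\mathrm{i}\psi_{1t}+\tfrac12\psi_{1xx}+(2|\psi_0|^2-1)\psi_1+\psi_0^2\psi_1^*=0$. In particular $\mu^{[ab]}=u^{[a]}_1u^{[b]}_1-(u^{[a]}_2u^{[b]}_2)^*$ ($C=1$) and $\nu^{[ab]}=\mathrm{i}u^{[a]}_1u^{[b]}_1+\mathrm{i}(u^{[a]}_2u^{[b]}_2)^*$ ($C=\mathrm{i}$) are solutions.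
   Context: $^*$ denotes complex conjugation; $u_j$ denotes the $j$-th component of $\mathbf{u}$. *)

theory Defs
  imports "HOL-Analysis.Analysis"
begin

text \<open>Functions on the (x,t)-plane are curried: f x t. Partial derivatives are
  taken as one-variable derivatives in x (resp. t) with the other variable fixed.\<close>

definition classical_NLS_solution ::
  "(real \<Rightarrow> real \<Rightarrow> complex) \<Rightarrow> (real \<Rightarrow> real \<Rightarrow> complex) \<Rightarrow>
   (real \<Rightarrow> real \<Rightarrow> complex) \<Rightarrow> (real \<Rightarrow> real \<Rightarrow> complex) \<Rightarrow> bool" where
  "classical_NLS_solution \<psi> \<psi>x \<psi>xx \<psi>t \<longleftrightarrow>
     continuous_on UNIV (case_prod \<psi>) \<and> continuous_on UNIV (case_prod \<psi>x) \<and>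
     continuous_on UNIV (case_prod \<psi>xx) \<and> continuous_on UNIV (case_prod \<psi>t) \<and>
     (\<forall>x t. ((\<lambda>y. \<psi> y t) has_vector_derivative \<psi>x x t) (at x)) \<and>
     (\<forall>x t. ((\<lambda>y. \<psi>x y t) has_vector_derivative \<psi>xx x t) (at x)) \<and>
     (\<forall>x t. ((\<lambda>s. \<psi> x s) has_vector_derivative \<psi>t x t) (at t)) \<and>
     (\<forall>x t. \<i> * \<psi>t x t + \<psi>xx x t / 2 + (complex_of_real ((cmod (\<psi> x t))\<^sup>2) - 1) * \<psi> x t = 0)"

definition lax_pair_solution ::
  "(real \<Rightarrow> real \<Rightarrow> complex) \<Rightarrow> (real \<Rightarrow> real \<Rightarrow> complex) \<Rightarrow> complex \<Rightarrow>
   (real \<Rightarrow> real \<Rightarrow> complex) \<Rightarrow> (real \<Rightarrow> real \<Rightarrow> complex) \<Rightarrow> bool" where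
  "lax_pair_solution \<psi> \<psi>x \<zeta> u1 u2 \<longleftrightarrow>
     (\<forall>x t. ((\<lambda>y. u1 y t) has_vector_derivative
                (- \<i> * \<zeta> * u1 x t + \<psi> x t * u2 x t)) (at x)) \<and>
     (\<forall>x t. ((\<lambda>y. u2 y t) has_vector_derivative
                (- cnj (\<psi> x t) * u1 x t + \<i> * \<zeta> * u2 x t)) (at x)) \<and>
     (\<forall>x t. ((\<lambda>s. u1 x s) has_vector_derivative
                ((- \<i> * \<zeta>\<^sup>2 + \<i> / 2 * (complex_of_real ((cmod (\<psi> x t))\<^sup>2) - 1)) * u1 x t
                 + (\<zeta> * \<psi> x t + \<i> / 2 * \<psi>x x t) * u2 x t)) (at t)) \<and>
     (\<forall>x t. ((\<lambda>s. u2 x s) has_vector_derivative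
                ((- \<zeta> * cnj (\<psi> x t) + \<i> / 2 * cnj (\<psi>x x t)) * u1 x t
                 + (\<i> * \<zeta>\<^sup>2 - \<i> / 2 * (complex_of_real ((cmod (\<psi> x t))\<^sup>2) - 1)) * u2 x t)) (at t))"

definition solves_linearized_NLS ::
  "(real \<Rightarrow> real \<Rightarrow> complex) \<Rightarrow> (real \<Rightarrow> real \<Rightarrow> complex) \<Rightarrow> bool" where
  "solves_linearized_NLS \<psi>0 \<psi>1 \<longleftrightarrow>
     (\<exists>\<psi>1x \<psi>1xx \<psi>1t.
        (\<forall>x t. ((\<lambda>y. \<psi>1 y t) has_vector_derivative \<psi>1x x t) (at x)) \<and>
        (\<forall>x t. ((\<lambda>y. \<psi>1x y t) has_vector_derivative \<psi>1xx x t) (at x)) \<and>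
        (\<forall>x t. ((\<lambda>s. \<psi>1 x s) has_vector_derivative \<psi>1t x t) (at t)) \<and>
        (\<forall>x t. \<i> * \<psi>1t x t + \<psi>1xx x t / 2 + (2 * complex_of_real ((cmod (\<psi>0 x t))\<^sup>2) - 1) * \<psi>1 x t
               + (\<psi>0 x t)\<^sup>2 * cnj (\<psi>1 x t) = 0))"

end

theory Submission
  imports Defs
begin

text \<open>Write P = u1a u1b, Q = u2a u2b and R = u2a u1b + u1a u2b. The Lax pair makes (P, Q, R)
  satisfy a closed linear system in x and t, and eliminating R from it gives the coupled equations
  i P_t + P_xx/2 + (2|psi|^2 - 1) P - psi^2 Q = 0 and i Q_t - Q_xx/2 - (2|psi|^2 - 1) Q + cnj(psi)^2 P = 0.
  These are exactly the coefficients of C and cnj C in the linearized operator applied to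
  C P - cnj C cnj Q.\<close>

lemma solves_linearized_NLS_combination:
  fixes \<psi> P Q Px Pxx Pt Qx Qxx Qt :: "real \<Rightarrow> real \<Rightarrow> complex" and C :: complex
  assumes P_x: "\<And>x t. ((\<lambda>y. P y t) has_vector_derivative Px x t) (at x)"
    and P_xx: "\<And>x t. ((\<lambda>y. Px y t) has_vector_derivative Pxx x t) (at x)"
    and P_t: "\<And>x t. ((\<lambda>s. P x s) has_vector_derivative Pt x t) (at t)"
    and Q_x: "\<And>x t. ((\<lambda>y. Q y t) has_vector_derivative Qx x t) (at x)"
    and Q_xx: "\<And>x t. ((\<lambda>y. Qx y t) has_vector_derivative Qxx x t) (at x)"
    and Q_t: "\<And>x t. ((\<lambda>s. Q x s) has_vector_derivative Qt x t) (at t)"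
    and P_eq: "\<And>x t. \<i> * Pt x t + Pxx x t / 2
                 + (2 * complex_of_real ((cmod (\<psi> x t))\<^sup>2) - 1) * P x t - (\<psi> x t)\<^sup>2 * Q x t = 0"
    and Q_eq: "\<And>x t. \<i> * Qt x t - Qxx x t / 2
                 - (2 * complex_of_real ((cmod (\<psi> x t))\<^sup>2) - 1) * Q x t + (cnj (\<psi> x t))\<^sup>2 * P x t = 0"
  shows "solves_linearized_NLS \<psi> (\<lambda>x t. C * P x t - cnj C * cnj (Q x t))"
  unfolding solves_linearized_NLS_def
proof (intro exI conjI allI)
  fix x t
  show "((\<lambda>y. C * P y t - cnj C * cnj (Q y t)) has_vector_derivative
          C * Px x t - cnj C * cnj (Qx x t)) (at x)"
    by (intro P_x Q_x derivative_intros)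
  show "((\<lambda>y. C * Px y t - cnj C * cnj (Qx y t)) has_vector_derivative
          C * Pxx x t - cnj C * cnj (Qxx x t)) (at x)"
    by (intro P_xx Q_xx derivative_intros)
  show "((\<lambda>s. C * P x s - cnj C * cnj (Q x s)) has_vector_derivative
          C * Pt x t - cnj C * cnj (Qt x t)) (at t)"
    by (intro P_t Q_t derivative_intros)
  let ?m = "2 * complex_of_real ((cmod (\<psi> x t))\<^sup>2) - 1"
  have "\<i> * (C * Pt x t - cnj C * cnj (Qt x t)) + (C * Pxx x t - cnj C * cnj (Qxx x t)) / 2
        + ?m * (C * P x t - cnj C * cnj (Q x t)) + (\<psi> x t)\<^sup>2 * cnj (C * P x t - cnj C * cnj (Q x t))
      = C * (\<i> * Pt x t + Pxx x t / 2 + ?m * P x t - (\<psi> x t)\<^sup>2 * Q x t)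
        + cnj C * cnj (\<i> * Qt x t - Qxx x t / 2 - ?m * Q x t + (cnj (\<psi> x t))\<^sup>2 * P x t)"
    by (simp add: field_simps)
  then show "\<i> * (C * Pt x t - cnj C * cnj (Qt x t)) + (C * Pxx x t - cnj C * cnj (Qxx x t)) / 2
        + ?m * (C * P x t - cnj C * cnj (Q x t)) + (\<psi> x t)\<^sup>2 * cnj (C * P x t - cnj C * cnj (Q x t)) = 0"
    by (simp only: P_eq Q_eq complex_cnj_zero mult_zero_right add_0_right)
qed

lemma lax_pair_product_derivatives:
  fixes \<psi> \<psi>x a1 a2 b1 b2 P Q R m :: "real \<Rightarrow> real \<Rightarrow> complex" and \<zeta> :: complex
  assumes A: "lax_pair_solution \<psi> \<psi>x \<zeta> a1 a2"
    and B: "lax_pair_solution \<psi> \<psi>x \<zeta> b1 b2"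
    and P_def: "P = (\<lambda>x t. a1 x t * b1 x t)"
    and Q_def: "Q = (\<lambda>x t. a2 x t * b2 x t)"
    and R_def: "R = (\<lambda>x t. a2 x t * b1 x t + a1 x t * b2 x t)"
    and m_def: "m = (\<lambda>x t. complex_of_real ((cmod (\<psi> x t))\<^sup>2) - 1)"
  shows "((\<lambda>y. P y t) has_vector_derivative - 2 * \<i> * \<zeta> * P x t + \<psi> x t * R x t) (at x)"
    and "((\<lambda>y. Q y t) has_vector_derivative 2 * \<i> * \<zeta> * Q x t - cnj (\<psi> x t) * R x t) (at x)"
    and "((\<lambda>y. R y t) has_vector_derivative
           - 2 * cnj (\<psi> x t) * P x t + 2 * \<psi> x t * Q x t) (at x)"
    and "((\<lambda>s. P x s) has_vector_derivative
           2 * (- \<i> * \<zeta>\<^sup>2 + \<i> / 2 * m x t) * P x t + (\<zeta> * \<psi> x t + \<i> / 2 * \<psi>x x t) * R x t) (at t)"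
    and "((\<lambda>s. Q x s) has_vector_derivative
           2 * (\<i> * \<zeta>\<^sup>2 - \<i> / 2 * m x t) * Q x t
           + (- \<zeta> * cnj (\<psi> x t) + \<i> / 2 * cnj (\<psi>x x t)) * R x t) (at t)"
  using A B unfolding lax_pair_solution_def P_def Q_def R_def m_def
  by (auto intro!: derivative_eq_intros simp: algebra_simps)

lemma lax_pair_products_solve_linearized_NLS:
  fixes \<psi> \<psi>x a1 a2 b1 b2 :: "real \<Rightarrow> real \<Rightarrow> complex" and \<zeta> C :: complex
  assumes \<psi>_x: "\<And>x t. ((\<lambda>y. \<psi> y t) has_vector_derivative \<psi>x x t) (at x)"
    and A: "lax_pair_solution \<psi> \<psi>x \<zeta> a1 a2"
    and B: "lax_pair_solution \<psi> \<psi>x \<zeta> b1 b2"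
  shows "solves_linearized_NLS \<psi> (\<lambda>x t. C * a1 x t * b1 x t - cnj C * cnj (a2 x t * b2 x t))"
proof -
  define P where "P = (\<lambda>x t. a1 x t * b1 x t)"
  define Q where "Q = (\<lambda>x t. a2 x t * b2 x t)"
  define R where "R = (\<lambda>x t. a2 x t * b1 x t + a1 x t * b2 x t)"
  define m where "m = (\<lambda>x t. complex_of_real ((cmod (\<psi> x t))\<^sup>2) - 1)"
  note D = lax_pair_product_derivatives[OF A B P_def Q_def R_def m_def]
  define Px where "Px = (\<lambda>x t. - 2 * \<i> * \<zeta> * P x t + \<psi> x t * R x t)"
  define Qx where "Qx = (\<lambda>x t. 2 * \<i> * \<zeta> * Q x t - cnj (\<psi> x t) * R x t)"
  define Rx where "Rx = (\<lambda>x t. - 2 * cnj (\<psi> x t) * P x t + 2 * \<psi> x t * Q x t)"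
  define Pxx where "Pxx = (\<lambda>x t. - 2 * \<i> * \<zeta> * Px x t + \<psi>x x t * R x t + \<psi> x t * Rx x t)"
  define Qxx where "Qxx = (\<lambda>x t. 2 * \<i> * \<zeta> * Qx x t - cnj (\<psi>x x t) * R x t - cnj (\<psi> x t) * Rx x t)"
  define Pt where "Pt = (\<lambda>x t. 2 * (- \<i> * \<zeta>\<^sup>2 + \<i> / 2 * m x t) * P x t
                               + (\<zeta> * \<psi> x t + \<i> / 2 * \<psi>x x t) * R x t)"
  define Qt where "Qt = (\<lambda>x t. 2 * (\<i> * \<zeta>\<^sup>2 - \<i> / 2 * m x t) * Q x t
                               + (- \<zeta> * cnj (\<psi> x t) + \<i> / 2 * cnj (\<psi>x x t)) * R x t)"
  have norm_sq: "\<And>x t. complex_of_real ((cmod (\<psi> x t))\<^sup>2) = \<psi> x t * cnj (\<psi> x t)"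
    by (rule complex_norm_square)
  have "solves_linearized_NLS \<psi> (\<lambda>x t. C * P x t - cnj C * cnj (Q x t))"
  proof (rule solves_linearized_NLS_combination)
    fix x t
    show "((\<lambda>y. P y t) has_vector_derivative Px x t) (at x)"
      unfolding Px_def by (rule D)
    show "((\<lambda>y. Q y t) has_vector_derivative Qx x t) (at x)"
      unfolding Qx_def by (rule D)
    show "((\<lambda>s. P x s) has_vector_derivative Pt x t) (at t)"
      unfolding Pt_def by (rule D)
    show "((\<lambda>s. Q x s) has_vector_derivative Qt x t) (at t)"
      unfolding Qt_def by (rule D)
    show "((\<lambda>y. Px y t) has_vector_derivative Pxx x t) (at x)"
      unfolding Px_def Pxx_def Rx_def
      by (rule has_vector_derivative_eq_rhs, (rule D \<psi>_x derivative_intros)+)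
        (simp add: Px_def algebra_simps)
    show "((\<lambda>y. Qx y t) has_vector_derivative Qxx x t) (at x)"
      unfolding Qx_def Qxx_def Rx_def
      by (rule has_vector_derivative_eq_rhs, (rule D \<psi>_x derivative_intros)+)
        (simp add: Qx_def algebra_simps)
    show "\<i> * Pt x t + Pxx x t / 2 + (2 * complex_of_real ((cmod (\<psi> x t))\<^sup>2) - 1) * P x t
          - (\<psi> x t)\<^sup>2 * Q x t = 0"
      unfolding Pt_def Pxx_def Px_def Rx_def m_def norm_sq
      by (simp add: power2_eq_square field_simps)
    show "\<i> * Qt x t - Qxx x t / 2 - (2 * complex_of_real ((cmod (\<psi> x t))\<^sup>2) - 1) * Q x t
          + (cnj (\<psi> x t))\<^sup>2 * P x t = 0"
      unfolding Qt_def Qxx_def Qx_def Rx_def m_def norm_sq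
      by (simp add: power2_eq_square field_simps)
  qed
  then show ?thesis
    by (simp add: P_def Q_def mult.assoc)
qed

theorem mainTheorem13:
  fixes \<psi>0 \<psi>0x \<psi>0xx \<psi>0t :: "real \<Rightarrow> real \<Rightarrow> complex"
    and \<zeta> :: complex
    and ua1 ua2 ub1 ub2 :: "real \<Rightarrow> real \<Rightarrow> complex"
  assumes "classical_NLS_solution \<psi>0 \<psi>0x \<psi>0xx \<psi>0t"
    and "lax_pair_solution \<psi>0 \<psi>0x \<zeta> ua1 ua2"
    and "lax_pair_solution \<psi>0 \<psi>0x \<zeta> ub1 ub2"
  shows "(\<forall>C::complex. solves_linearized_NLS \<psi>0
            (\<lambda>x t. C * ua1 x t * ub1 x t - cnj C * cnj (ua2 x t * ub2 x t)))
      \<and> solves_linearized_NLS \<psi>0 (\<lambda>x t. ua1 x t * ub1 x t - cnj (ua2 x t * ub2 x t))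
      \<and> solves_linearized_NLS \<psi>0
            (\<lambda>x t. \<i> * ua1 x t * ub1 x t + \<i> * cnj (ua2 x t * ub2 x t))"
proof -
  have \<psi>0_x: "\<And>x t. ((\<lambda>y. \<psi>0 y t) has_vector_derivative \<psi>0x x t) (at x)"
    using assms(1) unfolding classical_NLS_solution_def by blast
  have "\<And>C. solves_linearized_NLS \<psi>0
            (\<lambda>x t. C * ua1 x t * ub1 x t - cnj C * cnj (ua2 x t * ub2 x t))"
    by (rule lax_pair_products_solve_linearized_NLS[OF \<psi>0_x assms(2,3)])
  from this[of 1] this[of \<i>] this show ?thesis
    by simp
qed

end
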